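(* Let $\left|\psi\right\rangle$ be a pure three-qubit state of parties $A,B,C$. For $X\in\{A,B,C\}$ define $$E^X_{LOCC}(\left|\psi\right\rangle)=\max\sum_{i=0}^1p_i\,E(|\psi_i\rangle),$$ where the maximum is over all orthonormal bases $\{|x_0\rangle,|x_1\rangle\}$ of party $X$'s qubit, $p_i=\|(\langle x_i|_X\otimes I)\left|\psi\right\rangle\|^2$, $|\psi_i\rangle=p_i^{-1/2}(\langle x_i|_X\otimes I)\left|\psi\right\rangle$ is the resulting pure state of the two remaining qubits, and $E$ is the entanglement entropy (von Neumann entropy, base 2, of either one-qubit reduced state). Let $E_{LOCC}(\left|\psi\right\rangle)=\max\{E^A_{LOCC},E^B_{LOCC},E^C_{LOCC}\}$. Then $$E_{MB}(\left|\psi\right\rangle)\ \ge\ E_{LOCC}(\left|\psi\right\rangle),$$ i.e. the entanglement measurement bound of a pure tripartite qubit state does not increase on average under a complete local projective measurement of one party.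
   Context: Entanglement measurement bound (EMB). Let $\left|\psi\right\rangle$ be a unit vector in $\mathcal{H}_1\otimes\cdots\otimes\mathcal{H}_N$, $\mathcal{H}_j=\mathbb{C}^{d_j}$. An adaptive local measurement scheme consists of: an ordering $\pi$ of the parties $\{1,\dots,N\}$; an orthonormal basis $\{|\phi^{(1)}_{i_1}\rangle\}_{i_1}$ of $\mathcal{H}_{\pi(1)}$; and, for each $k=2,\dots,N$ and each outcome history $(i_1,\dots,i_{k-1})$, an orthonormal basis $\{|\phi^{(k)}_{i_k|i_1\dots i_{k-1}}\rangle\}_{i_k}$ of $\mathcal{H}_{\pi(k)}$ (which may depend on the history). Its outcome distribution is $p_{i_1\dots i_N}=\big|\big(\langle\phi^{(1)}_{i_1}|\otimes\langle\phi^{(2)}_{i_2|i_1}|\otimes\cdots\otimes\langle\phi^{(N)}_{i_N|i_1\dots i_{N-1}}|\big)\left|\psi\right\rangle\big|^2$, where the $k$-th bra acts on the tensor factor of party $\pi(k)$. The EMB is $E_{MB}(\left|\psi\right\rangle)=\min H(\mathbf{p})$, where $H(\mathbf{p})=-\sum p_{i_1\dots i_N}\log_2 p_{i_1\dots i_N}$ is the Shannon entropy and the minimum is over all adaptive local measurement schemes (including all orderings of the parties). *)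

theory Defs
  imports Complex_Main "HOL-Combinatorics.Permutations"
begin

text \<open>Parties are indexed 0..N-1, party j has Hilbert space C^(d j);
  vectors in C^m are functions nat => complex (only indices < m matter).
  A joint basis configuration is a function x :: nat => nat with x j < d j for j < N
  and x j = 0 for j >= N.  A state is a function from configurations to amplitudes.\<close>

definition configs :: "nat \<Rightarrow> (nat \<Rightarrow> nat) \<Rightarrow> (nat \<Rightarrow> nat) set" where
  "configs N d = {x. (\<forall>j<N. x j < d j) \<and> (\<forall>j\<ge>N. x j = 0)}"

definition unit_state :: "nat \<Rightarrow> (nat \<Rightarrow> nat) \<Rightarrow> ((nat \<Rightarrow> nat) \<Rightarrow> complex) \<Rightarrow> bool" where
  "unit_state N d \<psi> \<longleftrightarrow> (\<Sum>x\<in>configs N d. (cmod (\<psi> x))\<^sup>2) = 1"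

text \<open>b i is the i-th vector of an orthonormal basis of C^m (m orthonormal vectors in C^m).\<close>
definition onb :: "nat \<Rightarrow> (nat \<Rightarrow> nat \<Rightarrow> complex) \<Rightarrow> bool" where
  "onb m b \<longleftrightarrow> (\<forall>i<m. \<forall>j<m. (\<Sum>k<m. cnj (b i k) * b j k) = (if i = j then 1 else 0))"

definition shannon :: "('a \<Rightarrow> real) \<Rightarrow> 'a set \<Rightarrow> real" where
  "shannon p S = (\<Sum>s\<in>S. if p s = 0 then 0 else - p s * log 2 (p s))"

text \<open>Adaptive local measurement scheme: ordering pi (a permutation of the parties) and
  bases B hist, where hist is the list of previous outcomes (i_1,...,i_k); B hist is the
  basis of party pi k used at step k+1 (0-based step k = length hist).\<close>
definition valid_scheme :: "nat \<Rightarrow> (nat \<Rightarrow> nat) \<Rightarrow> (nat \<Rightarrow> nat) \<Rightarrow> (nat list \<Rightarrow> nat \<Rightarrow> nat \<Rightarrow> complex) \<Rightarrow> bool" where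
  "valid_scheme N d \<pi> B \<longleftrightarrow> \<pi> permutes {..<N} \<and>
     (\<forall>hist. length hist < N \<longrightarrow> (\<forall>m<length hist. hist ! m < d (\<pi> m)) \<longrightarrow>
        onb (d (\<pi> (length hist))) (B hist))"

text \<open>Probability of outcome string i (i k = outcome at step k).\<close>
definition outcome_prob :: "nat \<Rightarrow> (nat \<Rightarrow> nat) \<Rightarrow> ((nat \<Rightarrow> nat) \<Rightarrow> complex) \<Rightarrow> (nat \<Rightarrow> nat)
     \<Rightarrow> (nat list \<Rightarrow> nat \<Rightarrow> nat \<Rightarrow> complex) \<Rightarrow> (nat \<Rightarrow> nat) \<Rightarrow> real" where
  "outcome_prob N d \<psi> \<pi> B i =
     (cmod (\<Sum>x\<in>configs N d. (\<Prod>k<N. cnj (B (map i [0..<k]) (i k) (x (\<pi> k)))) * \<psi> x))\<^sup>2"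

definition EMB :: "nat \<Rightarrow> (nat \<Rightarrow> nat) \<Rightarrow> ((nat \<Rightarrow> nat) \<Rightarrow> complex) \<Rightarrow> real" where
  "EMB N d \<psi> = Inf {shannon (outcome_prob N d \<psi> \<pi> B) (configs N (d \<circ> \<pi>)) | \<pi> B. valid_scheme N d \<pi> B}"

definition vn_entropy :: "nat \<Rightarrow> (nat \<Rightarrow> nat \<Rightarrow> complex) \<Rightarrow> real" where
  "vn_entropy m \<rho> = (SOME h. \<exists>lam v. onb m v \<and>
       (\<forall>j<m. \<forall>j'<m. \<rho> j j' = (\<Sum>k<m. complex_of_real (lam k) * v k j * cnj (v k j'))) \<and>
       h = shannon lam {..<m})"

text \<open>Entanglement entropy of a two-qubit pure state with amplitudes phi j k
  (first qubit j, second qubit k): von Neumann entropy of the reduced state of the first qubit.\<close>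
definition ent_entropy :: "(nat \<Rightarrow> nat \<Rightarrow> complex) \<Rightarrow> real" where
  "ent_entropy \<phi> = vn_entropy 2 (\<lambda>j j'. \<Sum>k<2. \<phi> j k * cnj (\<phi> j' k))"

definition cfg3 :: "nat \<Rightarrow> nat \<Rightarrow> nat \<Rightarrow> nat \<Rightarrow> nat \<Rightarrow> nat \<Rightarrow> (nat \<Rightarrow> nat)" where
  "cfg3 X a Y b Z c = (\<lambda>_. 0)(X := a, Y := b, Z := c)"

text \<open>The two remaining parties (in increasing order) when party X in {0,1,2} is measured.\<close>
definition rest1 :: "nat \<Rightarrow> nat" where "rest1 X = (if X = 0 then 1 else 0)"
definition rest2 :: "nat \<Rightarrow> nat" where "rest2 X = (if X = 2 then 1 else 2)"

text \<open>Unnormalised post-measurement state (<x_i|_X tensor I)|psi> of the remaining two qubits.\<close>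
definition post_unnorm :: "((nat \<Rightarrow> nat) \<Rightarrow> complex) \<Rightarrow> nat \<Rightarrow> (nat \<Rightarrow> nat \<Rightarrow> complex) \<Rightarrow> nat \<Rightarrow> nat \<Rightarrow> nat \<Rightarrow> complex" where
  "post_unnorm \<psi> X b i j k = (\<Sum>a<2. cnj (b i a) * \<psi> (cfg3 X a (rest1 X) j (rest2 X) k))"

definition post_prob :: "((nat \<Rightarrow> nat) \<Rightarrow> complex) \<Rightarrow> nat \<Rightarrow> (nat \<Rightarrow> nat \<Rightarrow> complex) \<Rightarrow> nat \<Rightarrow> real" where
  "post_prob \<psi> X b i = (\<Sum>j<2. \<Sum>k<2. (cmod (post_unnorm \<psi> X b i j k))\<^sup>2)"

definition post_state :: "((nat \<Rightarrow> nat) \<Rightarrow> complex) \<Rightarrow> nat \<Rightarrow> (nat \<Rightarrow> nat \<Rightarrow> complex) \<Rightarrow> nat \<Rightarrow> nat \<Rightarrow> nat \<Rightarrow> complex" where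
  "post_state \<psi> X b i j k = post_unnorm \<psi> X b i j k / complex_of_real (sqrt (post_prob \<psi> X b i))"

definition E_LOCC_party :: "((nat \<Rightarrow> nat) \<Rightarrow> complex) \<Rightarrow> nat \<Rightarrow> real" where
  "E_LOCC_party \<psi> X = Sup {\<Sum>i<2. post_prob \<psi> X b i * ent_entropy (post_state \<psi> X b i) | b. onb 2 b}"

definition E_LOCC :: "((nat \<Rightarrow> nat) \<Rightarrow> complex) \<Rightarrow> real" where
  "E_LOCC \<psi> = Max {E_LOCC_party \<psi> 0, E_LOCC_party \<psi> 1, E_LOCC_party \<psi> 2}"

end

theory Submission
  imports Defs "HOL-Analysis.Convex"
begin

(* Proof idea.  Fix a measured party X with basis b, and an adaptive scheme with ordering pi.
   Let S(W) be the von Neumann entropy of the one-qubit reduced state of party W.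

   (1) Measuring X leaves either unmeasured party W in a p_i-mixture of its post-measurement
       reduced states, so by concavity of the entropy, sum_i p_i E(psi_i) <= S(W) for W <> X.
   (2) Every scheme satisfies H(p) >= S(pi 0), by Schur concavity in the first basis and
       coarse-graining; and H(p) >= S(pi 2), because the state of the last party is the ensemble
       of the conditional vectors after two outcomes, whose entropy bounds S from above.
   If X <> pi 0 combine (1) for W = pi 0 with (2); otherwise use W = pi 2.  Taking Sup over b
   and Inf over schemes gives E^X_LOCC <= E_MB for each X, hence the theorem. *)

definition eta :: "real \<Rightarrow> real" where
  "eta x = (if x = 0 then 0 else - x * log 2 x)"

lemma eta_0 [simp]: "eta 0 = 0"
  by (simp add: eta_def)

lemma shannon_eta: "shannon p S = (\<Sum>s\<in>S. eta (p s))"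
  unfolding shannon_def eta_def by simp

text \<open>The tangent of the concave function \<open>eta\<close> at \<open>m > 0\<close> lies above its graph
  (a restatement of \<open>ln y \<le> y - 1\<close>).\<close>

lemma eta_le_tangent:
  assumes "x \<ge> 0" "m > 0"
  shows "eta x \<le> - x * log 2 m + (m - x) / ln 2"
proof (cases "x = 0")
  case True
  then show ?thesis using assms by (simp add: eta_def)
next
  case False
  then have x: "x > 0" using assms by simp
  have "ln (m / x) \<le> m / x - 1"
    using x assms by (intro ln_le_minus_one) simp
  then have "x * ln (m / x) \<le> m - x"
    using x mult_left_mono[of "ln (m / x)" "m / x - 1" x] by (simp add: field_simps)
  then have "- x * ln x \<le> - x * ln m + (m - x)"
    using x assms by (simp add: ln_div algebra_simps)
  then have "- x * ln x / ln 2 \<le> (- x * ln m + (m - x)) / ln 2"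
    by (rule divide_right_mono) simp
  then show ?thesis
    using False by (simp add: eta_def log_def diff_divide_distrib add_divide_distrib)
qed

text \<open>Jensen's inequality for \<open>eta\<close>, with sub-normalised weights (possible because \<open>eta 0 = 0\<close>).\<close>

lemma eta_concave:
  assumes "finite I" "\<And>i. i \<in> I \<Longrightarrow> t i \<ge> 0" "(\<Sum>i\<in>I. t i) \<le> 1"
    "\<And>i. i \<in> I \<Longrightarrow> x i \<ge> 0"
  shows "(\<Sum>i\<in>I. t i * eta (x i)) \<le> eta (\<Sum>i\<in>I. t i * x i)"
proof -
  define m where "m = (\<Sum>i\<in>I. t i * x i)"
  have "m \<ge> 0" unfolding m_def using assms by (simp add: sum_nonneg)
  show ?thesis
  proof (cases "m = 0")
    case True
    then have "\<forall>i\<in>I. t i * x i = 0"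
      using assms unfolding m_def by (subst (asm) sum_nonneg_eq_0_iff) auto
    then have "(\<Sum>i\<in>I. t i * eta (x i)) = 0"
      by (intro sum.neutral) (auto simp: eta_def)
    then show ?thesis using True m_def by simp
  next
    case False
    with \<open>m \<ge> 0\<close> have m: "m > 0" by simp
    have "(\<Sum>i\<in>I. t i * eta (x i)) \<le> (\<Sum>i\<in>I. t i * (- x i * log 2 m + (m - x i) / ln 2))"
      using assms eta_le_tangent[OF _ m] by (intro sum_mono mult_left_mono) auto
    also have "\<dots> = (\<Sum>i\<in>I. - (t i * x i) * log 2 m) + (\<Sum>i\<in>I. (m * t i - t i * x i) / ln 2)"
      by (subst sum.distrib[symmetric]) (rule sum.cong, auto simp: field_simps)
    also have "\<dots> = - m * log 2 m + (m * (\<Sum>i\<in>I. t i) - m) / ln 2"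
      by (simp add: m_def sum_distrib_right[symmetric] sum_negf sum_divide_distrib[symmetric]
          sum_subtractf sum_distrib_left)
    also have "\<dots> \<le> - m * log 2 m"
      using mult_left_mono[OF assms(3), of m] m by (simp add: divide_nonpos_pos)
    also have "\<dots> = eta m" using False by (simp add: eta_def)
    finally show ?thesis unfolding m_def .
  qed
qed

text \<open>Coarse-graining a distribution can only decrease entropy: \<open>eta\<close> is subadditive.\<close>

lemma eta_subadditive:
  assumes "finite J" "\<And>j. j \<in> J \<Longrightarrow> y j \<ge> 0"
  shows "eta (\<Sum>j\<in>J. y j) \<le> (\<Sum>j\<in>J. eta (y j))"
proof -
  define s where "s = (\<Sum>j\<in>J. y j)"
  have "s \<ge> 0" unfolding s_def using assms by (simp add: sum_nonneg)
  show ?thesis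
  proof (cases "s = 0")
    case True
    then show ?thesis using assms by (simp add: s_def eta_def sum_nonneg_eq_0_iff)
  next
    case False
    with \<open>s \<ge> 0\<close> have s: "s > 0" by simp
    have term_le: "- y j * log 2 s \<le> eta (y j)" if j: "j \<in> J" for j
    proof (cases "y j = 0")
      case False
      then have "y j > 0" using assms(2)[OF j] by linarith
      moreover have "y j \<le> s" unfolding s_def using assms j by (intro member_le_sum) auto
      ultimately show ?thesis using False by (simp add: eta_def mult_left_mono)
    qed simp
    have "eta s = (\<Sum>j\<in>J. - y j * log 2 s)"
      using False by (simp add: eta_def s_def sum_distrib_right sum_negf)
    also have "\<dots> \<le> (\<Sum>j\<in>J. eta (y j))"
      by (intro sum_mono term_le)
    finally show ?thesis unfolding s_def .
  qed
qed

lemma eta_majorization: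
  fixes s :: "'z \<Rightarrow> 'k \<Rightarrow> real"
  assumes "finite Z" "finite K" "\<And>k. k \<in> K \<Longrightarrow> \<mu> k \<ge> 0"
    "\<And>z k. z \<in> Z \<Longrightarrow> k \<in> K \<Longrightarrow> s z k \<ge> 0"
    "\<And>z. z \<in> Z \<Longrightarrow> (\<Sum>k\<in>K. s z k) \<le> 1"
    "\<And>k. k \<in> K \<Longrightarrow> \<mu> k = 0 \<or> (\<Sum>z\<in>Z. s z k) = 1"
    "\<And>z. z \<in> Z \<Longrightarrow> w z = (\<Sum>k\<in>K. s z k * \<mu> k)"
  shows "(\<Sum>k\<in>K. eta (\<mu> k)) \<le> (\<Sum>z\<in>Z. eta (w z))"
proof -
  have "(\<Sum>k\<in>K. eta (\<mu> k)) = (\<Sum>k\<in>K. (\<Sum>z\<in>Z. s z k) * eta (\<mu> k))"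
  proof (rule sum.cong)
    fix k assume "k \<in> K"
    then have "\<mu> k = 0 \<or> (\<Sum>z\<in>Z. s z k) = 1" by (rule assms(6))
    then show "eta (\<mu> k) = (\<Sum>z\<in>Z. s z k) * eta (\<mu> k)" by auto
  qed simp
  also have "\<dots> = (\<Sum>z\<in>Z. \<Sum>k\<in>K. s z k * eta (\<mu> k))"
    by (simp add: sum_distrib_right sum.swap[of _ Z])
  also have "\<dots> \<le> (\<Sum>z\<in>Z. eta (w z))"
    using assms by (intro sum_mono) (simp add: eta_concave)
  finally show ?thesis .
qed

text \<open>Vectors of \<open>\<complex>\<^sup>2\<close> are functions \<open>nat \<Rightarrow> complex\<close> read on \<open>{0, 1}\<close>; a \<open>2 \<times> 2\<close>
  matrix is a function \<open>nat \<Rightarrow> nat \<Rightarrow> complex\<close>.\<close>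

lemma sum_lessThan_2: "(\<Sum>k<(2::nat). f k) = f 0 + f 1"
  by (simp add: numeral_2_eq_2)

lemma less_2_cases: "(k::nat) < 2 \<longleftrightarrow> k = 0 \<or> k = 1"
  by auto

definition inner2 :: "(nat \<Rightarrow> complex) \<Rightarrow> (nat \<Rightarrow> complex) \<Rightarrow> complex" where
  "inner2 f g = (\<Sum>j<2. cnj (f j) * g j)"

definition qform :: "(nat \<Rightarrow> nat \<Rightarrow> complex) \<Rightarrow> (nat \<Rightarrow> complex) \<Rightarrow> (nat \<Rightarrow> complex) \<Rightarrow> complex" where
  "qform \<rho> f g = (\<Sum>j<2. \<Sum>j'<2. cnj (f j) * \<rho> j j' * g j')"

definition gram_matrix :: "'z set \<Rightarrow> ('z \<Rightarrow> nat \<Rightarrow> complex) \<Rightarrow> nat \<Rightarrow> nat \<Rightarrow> complex" where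
  "gram_matrix Z u j j' = (\<Sum>z\<in>Z. u z j * cnj (u z j'))"

lemma mult_cnj_eq_norm_sq: "z * cnj z = complex_of_real ((cmod z)\<^sup>2)"
  by (simp only: complex_norm_square)

lemma inner2_swap: "inner2 g f = cnj (inner2 f g)"
  by (simp add: inner2_def mult.commute)

lemma inner2_self: "inner2 f f = complex_of_real (\<Sum>j<2. (cmod (f j))\<^sup>2)"
  by (simp add: inner2_def mult_cnj_eq_norm_sq mult.commute)

lemma qform_expand:
  "qform \<rho> f g = cnj (f 0) * \<rho> 0 0 * g 0 + cnj (f 0) * \<rho> 0 1 * g 1
     + cnj (f 1) * \<rho> 1 0 * g 0 + cnj (f 1) * \<rho> 1 1 * g 1"
  by (simp add: qform_def sum_lessThan_2)

text \<open>A \<open>2 \<times> 2\<close> matrix with orthonormal rows has the form \<open>[[a, b], [-D b\<^sup>*, D a\<^sup>*]]\<close> with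
  \<open>|D| = 1\<close>; consequently its columns are orthonormal too.\<close>

lemma onb2_rows:
  assumes "onb 2 v"
  shows "cnj (v 0 0) * v 0 0 + cnj (v 0 1) * v 0 1 = 1"
    "cnj (v 1 0) * v 1 0 + cnj (v 1 1) * v 1 1 = 1"
    "cnj (v 0 0) * v 1 0 + cnj (v 0 1) * v 1 1 = 0"
  using assms unfolding onb_def by (auto simp: sum_lessThan_2)

lemma onb2_unitary_shape:
  assumes "onb 2 v"
  defines "D \<equiv> v 0 0 * v 1 1 - v 0 1 * v 1 0"
  shows "v 1 0 = - D * cnj (v 0 1)" "v 1 1 = D * cnj (v 0 0)" "cnj D * D = 1"
proof -
  note r = onb2_rows[OF assms(1)]
  have "v 1 0 - (- D * cnj (v 0 1)) = v 0 0 * (cnj (v 0 0) * v 1 0 + cnj (v 0 1) * v 1 1)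
          + v 1 0 * (1 - (cnj (v 0 0) * v 0 0 + cnj (v 0 1) * v 0 1))"
    unfolding D_def by (simp add: algebra_simps)
  with r show c: "v 1 0 = - D * cnj (v 0 1)" by (simp add: eq_neg_iff_add_eq_0)
  have "v 1 1 - D * cnj (v 0 0) = v 0 1 * (cnj (v 0 0) * v 1 0 + cnj (v 0 1) * v 1 1)
          + v 1 1 * (1 - (cnj (v 0 0) * v 0 0 + cnj (v 0 1) * v 0 1))"
    unfolding D_def by (simp add: algebra_simps)
  with r show d: "v 1 1 = D * cnj (v 0 0)" by (simp add: right_minus_eq)
  have "cnj (v 1 0) * v 1 0 + cnj (v 1 1) * v 1 1
      = cnj D * D * (cnj (v 0 0) * v 0 0 + cnj (v 0 1) * v 0 1)"
    unfolding c d by (simp add: algebra_simps)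
  with r show "cnj D * D = 1" by simp
qed

lemma onb2_columns:
  assumes "onb 2 v" "a < 2" "b < 2"
  shows "(\<Sum>k<2. v k a * cnj (v k b)) = (if a = b then 1 else 0)"
proof -
  define D where "D = v 0 0 * v 1 1 - v 0 1 * v 1 0"
  note shape = onb2_unitary_shape[OF assms(1), folded D_def]
  note r = onb2_rows[OF assms(1)]
  have "v 0 0 * cnj (v 0 0) + v 1 0 * cnj (v 1 0)
      = cnj (v 0 0) * v 0 0 + cnj (v 0 1) * v 0 1 * (cnj D * D)"
    unfolding shape(1) by (simp add: algebra_simps)
  then have c00: "v 0 0 * cnj (v 0 0) + v 1 0 * cnj (v 1 0) = 1"
    using r shape(3) by (simp add: mult.commute)
  have "v 0 1 * cnj (v 0 1) + v 1 1 * cnj (v 1 1)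
      = cnj (v 0 0) * v 0 0 + cnj (v 0 1) * v 0 1 + cnj (v 0 0) * v 0 0 * (cnj D * D - 1)"
    unfolding shape(2) by (simp add: algebra_simps)
  then have c11: "v 0 1 * cnj (v 0 1) + v 1 1 * cnj (v 1 1) = 1"
    using r shape(3) by (simp add: mult.commute add.commute)
  have "v 0 0 * cnj (v 0 1) + v 1 0 * cnj (v 1 1) = v 0 0 * cnj (v 0 1) * (1 - cnj D * D)"
    unfolding shape(1,2) by (simp add: algebra_simps)
  then have c01: "v 0 0 * cnj (v 0 1) + v 1 0 * cnj (v 1 1) = 0"
    using shape(3) by simp
  then have c10: "v 0 1 * cnj (v 0 0) + v 1 1 * cnj (v 1 0) = 0"
    by (metis (no_types) complex_cnj_add complex_cnj_cnj complex_cnj_mult complex_cnj_zero_iff mult.commute)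
  show ?thesis
    using assms(2,3) c00 c11 c01 c10 by (auto simp: sum_lessThan_2 less_2_cases)
qed

lemma onb2_inner:
  assumes "onb 2 v" "a < 2" "b < 2"
  shows "inner2 (v a) (v b) = (if a = b then 1 else 0)"
  using assms unfolding onb_def inner2_def by auto

lemma onb2_norm:
  assumes "onb 2 v" "a < 2"
  shows "(\<Sum>j<2. (cmod (v a j))\<^sup>2) = 1"
proof -
  have "complex_of_real (\<Sum>j<2. (cmod (v a j))\<^sup>2) = 1"
    using onb2_inner[OF assms(1,2,2)] by (simp only: inner2_self) simp
  then show ?thesis by (simp only: of_real_eq_1_iff)
qed

lemma parseval:
  assumes "onb 2 b"
  shows "(\<Sum>i<2. inner2 (b i) F * cnj (inner2 (b i) G)) = (\<Sum>a<2. F a * cnj (G a))"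
proof -
  have "(\<Sum>i<2. inner2 (b i) F * cnj (inner2 (b i) G))
      = (\<Sum>a<2. \<Sum>a'<2. F a * cnj (G a') * (\<Sum>i<2. b i a' * cnj (b i a)))"
    by (simp add: inner2_def sum_lessThan_2 algebra_simps)
  also have "\<dots> = (\<Sum>a<2. F a * cnj (G a))"
    using onb2_columns[OF assms] by (simp add: sum_lessThan_2)
  finally show ?thesis .
qed

lemma parseval_norm:
  assumes "onb 2 b"
  shows "(\<Sum>i<2. (cmod (inner2 (b i) g))\<^sup>2) = (\<Sum>a<2. (cmod (g a))\<^sup>2)"
proof -
  have "complex_of_real (\<Sum>i<2. (cmod (inner2 (b i) g))\<^sup>2) = complex_of_real (\<Sum>a<2. (cmod (g a))\<^sup>2)"
    using parseval[OF assms, of g g] by (simp add: mult_cnj_eq_norm_sq)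
  then show ?thesis by (simp only: of_real_eq_iff)
qed

text \<open>An eigendecomposition \<open>\<rho> = \<Sum>\<^sub>k \<lambda>\<^sub>k |v\<^sub>k\<rangle>\<langle>v\<^sub>k|\<close> with an orthonormal basis \<open>v\<close>; this is the
  data over which the definition of \<open>vn_entropy\<close> chooses.\<close>

definition eigendec :: "(nat \<Rightarrow> real) \<Rightarrow> (nat \<Rightarrow> nat \<Rightarrow> complex) \<Rightarrow> (nat \<Rightarrow> nat \<Rightarrow> complex) \<Rightarrow> bool" where
  "eigendec lam v \<rho> \<longleftrightarrow> onb 2 v \<and>
     (\<forall>j<2. \<forall>j'<2. \<rho> j j' = (\<Sum>k<2. complex_of_real (lam k) * v k j * cnj (v k j')))"

lemma eigendec_onb: "eigendec lam v \<rho> \<Longrightarrow> onb 2 v"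
  by (simp add: eigendec_def)

lemma eigendec_entry:
  "eigendec lam v \<rho> \<Longrightarrow> j < 2 \<Longrightarrow> j' < 2 \<Longrightarrow>
     \<rho> j j' = (\<Sum>k<2. complex_of_real (lam k) * v k j * cnj (v k j'))"
  by (simp add: eigendec_def)

lemma eigendec_qform:
  assumes "eigendec lam v \<rho>"
  shows "qform \<rho> f g = (\<Sum>k<2. complex_of_real (lam k) * inner2 f (v k) * inner2 (v k) g)"
  by (simp add: qform_expand eigendec_entry[OF assms] inner2_def sum_lessThan_2 algebra_simps)

lemma eigendec_eigenvector:
  assumes "eigendec lam v \<rho>" "m < 2" "m' < 2"
  shows "qform \<rho> (v m) (v m') = (if m = m' then complex_of_real (lam m) else 0)"
  using assms(2,3)
  by (simp add: eigendec_qform[OF assms(1)] onb2_inner[OF eigendec_onb[OF assms(1)]]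
      sum_lessThan_2 less_2_cases) auto

lemma eigendec_qform_diag:
  assumes "eigendec lam v \<rho>"
  shows "qform \<rho> g g = complex_of_real (\<Sum>k<2. lam k * (cmod (inner2 g (v k)))\<^sup>2)"
  by (simp add: eigendec_qform[OF assms] inner2_swap[of "v _" g] mult.assoc mult_cnj_eq_norm_sq)

lemma eigendec_trace:
  assumes "eigendec lam v \<rho>"
  shows "\<rho> 0 0 + \<rho> 1 1 = complex_of_real (lam 0 + lam 1)"
proof -
  note r = onb2_rows[OF eigendec_onb[OF assms]]
  have "\<rho> 0 0 + \<rho> 1 1 - complex_of_real (lam 0 + lam 1) =
     complex_of_real (lam 0) * (cnj (v 0 0) * v 0 0 + cnj (v 0 1) * v 0 1 - 1)
   + complex_of_real (lam 1) * (cnj (v 1 0) * v 1 0 + cnj (v 1 1) * v 1 1 - 1)"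
    by (simp add: eigendec_entry[OF assms] sum_lessThan_2 algebra_simps)
  then show ?thesis using r by simp
qed

lemma eigendec_det:
  assumes "eigendec lam v \<rho>"
  shows "\<rho> 0 0 * \<rho> 1 1 - \<rho> 0 1 * \<rho> 1 0 = complex_of_real (lam 0 * lam 1)"
proof -
  let ?D = "v 0 0 * v 1 1 - v 0 1 * v 1 0"
  have "\<rho> 0 0 * \<rho> 1 1 - \<rho> 0 1 * \<rho> 1 0 = complex_of_real (lam 0 * lam 1) * (cnj ?D * ?D)"
    by (simp add: eigendec_entry[OF assms] sum_lessThan_2 algebra_simps)
  then show ?thesis using onb2_unitary_shape(3)[OF eigendec_onb[OF assms]] by simp
qed

lemma same_sum_and_product:
  fixes x y x' y' :: real
  assumes "x + y = x' + y'" "x * y = x' * y'"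
  shows "(x' = x \<and> y' = y) \<or> (x' = y \<and> y' = x)"
proof -
  have "(x' - x) * (x' - y) = x' * x' - x' * (x + y) + x * y" by (simp add: algebra_simps)
  also have "\<dots> = 0" using assms by (simp add: algebra_simps)
  finally show ?thesis using assms by auto
qed

text \<open>The entropy of the eigenvalues depends only on trace and determinant; in particular
  all eigendecompositions of one matrix give the same entropy.\<close>

lemma eigendec_entropy_eq:
  assumes "eigendec lam v \<rho>" "eigendec lam' v' \<sigma>"
    and "\<rho> 0 0 + \<rho> 1 1 = \<sigma> 0 0 + \<sigma> 1 1"
    and "\<rho> 0 0 * \<rho> 1 1 - \<rho> 0 1 * \<rho> 1 0 = \<sigma> 0 0 * \<sigma> 1 1 - \<sigma> 0 1 * \<sigma> 1 0"
  shows "(\<Sum>k<2. eta (lam k)) = (\<Sum>k<2. eta (lam' k))"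
proof -
  have "lam 0 + lam 1 = lam' 0 + lam' 1"
    using eigendec_trace[OF assms(1)] eigendec_trace[OF assms(2)] assms(3) by (metis of_real_eq_iff)
  moreover have "lam 0 * lam 1 = lam' 0 * lam' 1"
    using eigendec_det[OF assms(1)] eigendec_det[OF assms(2)] assms(4) by (metis of_real_eq_iff)
  ultimately have "(lam' 0 = lam 0 \<and> lam' 1 = lam 1) \<or> (lam' 0 = lam 1 \<and> lam' 1 = lam 0)"
    by (rule same_sum_and_product)
  then show ?thesis by (auto simp: sum_lessThan_2)
qed

lemma vn_entropy_eigendec:
  assumes "eigendec lam v \<rho>"
  shows "vn_entropy 2 \<rho> = (\<Sum>k<2. eta (lam k))"
proof -
  let ?P = "\<lambda>h. \<exists>lam v. onb 2 v \<and>
       (\<forall>j<2. \<forall>j'<2. \<rho> j j' = (\<Sum>k<2. complex_of_real (lam k) * v k j * cnj (v k j'))) \<and>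
       h = shannon lam {..<2}"
  have "?P (shannon lam {..<2})" using assms unfolding eigendec_def by blast
  then have "?P (SOME h. ?P h)" by (rule someI)
  then obtain lam' v' where d: "eigendec lam' v' \<rho>" and h: "(SOME h. ?P h) = shannon lam' {..<2}"
    unfolding eigendec_def by blast
  have "vn_entropy 2 \<rho> = (\<Sum>k<2. eta (lam' k))"
    unfolding vn_entropy_def using h by (simp add: shannon_eta)
  also have "\<dots> = (\<Sum>k<2. eta (lam k))"
    using eigendec_entropy_eq[OF d assms] by simp
  finally show ?thesis .
qed

lemma onb_pair:
  fixes t :: real
  assumes c: "c \<noteq> 0"
  defines "n \<equiv> sqrt ((cmod c)\<^sup>2 + t\<^sup>2)"
  shows "onb 2 (\<lambda>k j. if k = 0 then (if j = 0 then c / complex_of_real n else complex_of_real (t / n))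
                      else (if j = 0 then complex_of_real (- t / n) else cnj c / complex_of_real n))"
    (is "onb 2 ?v")
proof -
  define C where "C = (cmod c)\<^sup>2"
  have n: "n > 0" "n\<^sup>2 = C + t\<^sup>2"
    unfolding n_def C_def using c by (simp_all add: add_pos_nonneg)
  have cc: "c * cnj c = complex_of_real C" "cnj c * c = complex_of_real C"
    by (simp_all add: C_def mult_cnj_eq_norm_sq mult.commute)
  define v where "v = ?v"
  have "cnj (v 0 0) * v 0 0 + cnj (v 0 1) * v 0 1 = complex_of_real ((C + t\<^sup>2) / n\<^sup>2)"
    "cnj (v 1 0) * v 1 0 + cnj (v 1 1) * v 1 1 = complex_of_real ((C + t\<^sup>2) / n\<^sup>2)"
    "cnj (v 0 0) * v 1 0 + cnj (v 0 1) * v 1 1 = 0"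
    "cnj (v 1 0) * v 0 0 + cnj (v 1 1) * v 0 1 = 0"
    using n(1) by (simp_all add: v_def cc field_simps power2_eq_square)
  moreover have "(C + t\<^sup>2) / n\<^sup>2 = 1" using n(1) by (simp add: n(2)[symmetric])
  ultimately have "onb 2 v" unfolding onb_def by (auto simp: sum_lessThan_2 less_2_cases)
  then show ?thesis by (simp add: v_def)
qed

lemma hermitian_eigendec_offdiag:
  fixes a d t :: real
  assumes ra: "\<rho> 0 0 = complex_of_real a" and rd: "\<rho> 1 1 = complex_of_real d"
    and rc: "\<rho> 0 1 = c" "\<rho> 1 0 = cnj c" and c: "c \<noteq> 0"
    and tC: "(cmod c)\<^sup>2 = t * (t + a - d)"
  defines "n \<equiv> sqrt ((cmod c)\<^sup>2 + t\<^sup>2)"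
  defines "v \<equiv> \<lambda>k j. if k = 0 then (if j = 0 then c / complex_of_real n else complex_of_real (t / n))
                      else (if j = 0 then complex_of_real (- t / n) else cnj c / complex_of_real n)"
  shows "eigendec (\<lambda>k. if k = 0 then t + a else d - t) v \<rho>"
proof -
  define C where "C = (cmod c)\<^sup>2"
  have n: "n > 0" "n\<^sup>2 = C + t\<^sup>2"
    unfolding n_def C_def using c by (simp_all add: add_pos_nonneg)
  have nz: "complex_of_real n \<noteq> 0" using n by simp
  have cc: "c * cnj c = complex_of_real C" "cnj c * c = complex_of_real C"
    by (simp_all add: C_def mult_cnj_eq_norm_sq mult.commute)
  have C_t: "(t + a) * C + (d - t) * t\<^sup>2 = a * (C + t\<^sup>2)"
    "(t + a) * t\<^sup>2 + (d - t) * C = d * (C + t\<^sup>2)"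
    "t * (2 * t + a - d) = C + t\<^sup>2"
    unfolding C_def tC by (simp_all add: algebra_simps power2_eq_square)
  let ?lam = "\<lambda>k::nat. if k = 0 then t + a else d - t"
  have "(\<Sum>k<2. complex_of_real (?lam k) * v k 0 * cnj (v k 0))
          = complex_of_real (((t + a) * C + (d - t) * t\<^sup>2) / n\<^sup>2)"
    "(\<Sum>k<2. complex_of_real (?lam k) * v k 1 * cnj (v k 1))
          = complex_of_real (((t + a) * t\<^sup>2 + (d - t) * C) / n\<^sup>2)"
    "(\<Sum>k<2. complex_of_real (?lam k) * v k 0 * cnj (v k 1))
          = c * complex_of_real (t * (2 * t + a - d) / n\<^sup>2)"
    "(\<Sum>k<2. complex_of_real (?lam k) * v k 1 * cnj (v k 0))
          = cnj c * complex_of_real (t * (2 * t + a - d) / n\<^sup>2)"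
    using nz by (simp_all add: sum_lessThan_2 v_def cc field_simps power2_eq_square)
  then have "\<rho> j j' = (\<Sum>k<2. complex_of_real (?lam k) * v k j * cnj (v k j'))"
    if "j < 2" "j' < 2" for j j'
    using that n(1) ra rd rc C_t by (auto simp: less_2_cases n(2)[symmetric])
  moreover have "onb 2 v" unfolding v_def n_def by (rule onb_pair[OF c])
  ultimately show ?thesis unfolding eigendec_def by blast
qed

lemma hermitian_eigendec_exists:
  assumes "\<rho> 1 0 = cnj (\<rho> 0 1)" "Im (\<rho> 0 0) = 0" "Im (\<rho> 1 1) = 0"
  shows "\<exists>lam v. eigendec lam v \<rho>"
proof -
  define a d c where "a = Re (\<rho> 0 0)" "d = Re (\<rho> 1 1)" "c = \<rho> 0 1"
  have ra: "\<rho> 0 0 = complex_of_real a" and rd: "\<rho> 1 1 = complex_of_real d"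
    using assms(2,3) by (simp_all add: a_d_c_def complex_eq_iff)
  show ?thesis
  proof (cases "c = 0")
    case True
    have "eigendec (\<lambda>k. if k = 0 then a else d) (\<lambda>k j. if k = j then 1 else 0) \<rho>"
      unfolding eigendec_def onb_def using ra rd assms(1) True
      by (auto simp: sum_lessThan_2 less_2_cases a_d_c_def)
    then show ?thesis by blast
  next
    case False
    define t where "t = (d - a) / 2 + sqrt (((a - d) / 2)\<^sup>2 + (cmod c)\<^sup>2)"
    have "(sqrt (((a - d) / 2)\<^sup>2 + (cmod c)\<^sup>2))\<^sup>2 = ((a - d) / 2)\<^sup>2 + (cmod c)\<^sup>2"
      by simp
    then have tC: "(cmod c)\<^sup>2 = t * (t + a - d)"
      unfolding t_def by (simp add: power2_eq_square field_simps)
    have rc: "\<rho> 0 1 = c" "\<rho> 1 0 = cnj c" using assms(1) by (simp_all add: a_d_c_def)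
    show ?thesis
      using hermitian_eigendec_offdiag[OF ra rd rc False tC] by blast
  qed
qed

text \<open>Gram matrices \<open>\<Sum>\<^sub>z |u\<^sub>z\<rangle>\<langle>u\<^sub>z|\<close> are exactly the (unnormalised) density matrices arising
  below; they are Hermitian and positive semidefinite.\<close>

lemma gram_qform:
  "qform (gram_matrix Z u) f g = (\<Sum>z\<in>Z. inner2 f (u z) * inner2 (u z) g)"
  by (simp add: qform_expand gram_matrix_def inner2_def sum_lessThan_2 sum_distrib_left
      sum_distrib_right sum.distrib[symmetric] algebra_simps)

lemma gram_qform_diag:
  "Re (qform (gram_matrix Z u) f f) = (\<Sum>z\<in>Z. (cmod (inner2 f (u z)))\<^sup>2)"
proof -
  have "qform (gram_matrix Z u) f f = (\<Sum>z\<in>Z. inner2 f (u z) * cnj (inner2 f (u z)))"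
    by (simp add: gram_qform inner2_swap[of "u _"])
  also have "\<dots> = complex_of_real (\<Sum>z\<in>Z. (cmod (inner2 f (u z)))\<^sup>2)"
    by (simp add: mult_cnj_eq_norm_sq)
  finally show ?thesis by simp
qed

lemma gram_eigendec_exists: "\<exists>lam v. eigendec lam v (gram_matrix Z u)"
  by (rule hermitian_eigendec_exists)
    (simp_all add: gram_matrix_def mult.commute mult_cnj_eq_norm_sq Im_sum)

lemma gram_eigenvalue:
  assumes "eigendec \<mu> v (gram_matrix Z u)" "k < 2"
  shows "\<mu> k = (\<Sum>z\<in>Z. (cmod (inner2 (v k) (u z)))\<^sup>2)"
  using gram_qform_diag[of Z u "v k"] eigendec_eigenvector[OF assms(1) assms(2) assms(2)] by simp

lemma gram_eigenvalue_nonneg: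
  "eigendec \<mu> v (gram_matrix Z u) \<Longrightarrow> k < 2 \<Longrightarrow> \<mu> k \<ge> 0"
  by (simp add: gram_eigenvalue sum_nonneg)

text \<open>The two one-qubit reduced states of a two-qubit vector have the same entropy
  (their trace and determinant agree).\<close>

lemma vn_entropy_gram_transpose:
  "vn_entropy 2 (gram_matrix {..<2} (\<lambda>k j. \<phi> j k)) = vn_entropy 2 (gram_matrix {..<2} \<phi>)"
proof -
  obtain l1 v1 where d1: "eigendec l1 v1 (gram_matrix {..<2} (\<lambda>k j. \<phi> j k))"
    using gram_eigendec_exists by (metis fst_conv snd_conv)
  obtain l2 v2 where d2: "eigendec l2 v2 (gram_matrix {..<2} \<phi>)"
    using gram_eigendec_exists by (metis fst_conv snd_conv)
  have "(\<Sum>k<2. eta (l1 k)) = (\<Sum>k<2. eta (l2 k))"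
    by (rule eigendec_entropy_eq[OF d1 d2]) (simp_all add: gram_matrix_def sum_lessThan_2 algebra_simps)
  then show ?thesis by (simp add: vn_entropy_eigendec[OF d1] vn_entropy_eigendec[OF d2])
qed

text \<open>Schur concavity: the eigenvalue entropy is at most the entropy of the diagonal of
  \<open>\<rho>\<close> in any orthonormal basis \<open>f\<close> (the diagonal is a doubly stochastic image of the spectrum).\<close>

lemma eigendec_entropy_le_diagonal:
  assumes d: "eigendec \<mu> v \<rho>" and \<mu>: "\<And>k. k < 2 \<Longrightarrow> \<mu> k \<ge> 0" and f: "onb 2 f"
  shows "(\<Sum>k<2. eta (\<mu> k)) \<le> (\<Sum>m<2. eta (Re (qform \<rho> (f m) (f m))))"
proof (rule eta_majorization[where s = "\<lambda>m k. (cmod (inner2 (f m) (v k)))\<^sup>2"])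
  have v: "onb 2 v" using d by (rule eigendec_onb)
  show "(\<Sum>k<2. (cmod (inner2 (f m) (v k)))\<^sup>2) \<le> 1" if "m \<in> {..<2}" for m
    using parseval_norm[OF v, of "f m"] onb2_norm[OF f] that by (simp add: inner2_swap[of "f m"])
  show "\<mu> k = 0 \<or> (\<Sum>m<2. (cmod (inner2 (f m) (v k)))\<^sup>2) = 1" if "k \<in> {..<2}" for k
    using parseval_norm[OF f, of "v k"] onb2_norm[OF v, of k] that by simp
  show "Re (qform \<rho> (f m) (f m)) = (\<Sum>k<2. (cmod (inner2 (f m) (v k)))\<^sup>2 * \<mu> k)" for m
    by (simp add: eigendec_qform_diag[OF d] mult.commute)
qed (use \<mu> in auto)

lemma norm_sum_mult_cnj_sq_le:
  fixes f g :: "'z \<Rightarrow> complex"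
  shows "(cmod (\<Sum>z\<in>Z. f z * cnj (g z)))\<^sup>2 \<le> (\<Sum>z\<in>Z. (cmod (f z))\<^sup>2) * (\<Sum>z\<in>Z. (cmod (g z))\<^sup>2)"
proof -
  have "cmod (\<Sum>z\<in>Z. f z * cnj (g z)) \<le> (\<Sum>z\<in>Z. cmod (f z) * cmod (g z))"
    by (rule order_trans[OF norm_sum]) (simp add: norm_mult)
  then have "(cmod (\<Sum>z\<in>Z. f z * cnj (g z)))\<^sup>2 \<le> (\<Sum>z\<in>Z. cmod (f z) * cmod (g z))\<^sup>2"
    by (rule power_mono) simp
  also have "\<dots> \<le> (\<Sum>z\<in>Z. (cmod (f z))\<^sup>2) * (\<Sum>z\<in>Z. (cmod (g z))\<^sup>2)"
    by (rule Cauchy_Schwarz_ineq_sum)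
  finally show ?thesis .
qed

text \<open>The key point is \<open>\<mu>\<^sub>1 |\<alpha>\<^sub>z\<^sub>0|\<^sup>2 + \<mu>\<^sub>0 |\<alpha>\<^sub>z\<^sub>1|\<^sup>2 \<le> \<mu>\<^sub>0 \<mu>\<^sub>1\<close>, from Cauchy-Schwarz on the
  remaining rows.\<close>

lemma row_bound_orthogonal_columns:
  fixes \<alpha> :: "'z \<Rightarrow> nat \<Rightarrow> complex"
  assumes fin: "finite Z" and off: "(\<Sum>z\<in>Z. \<alpha> z 0 * cnj (\<alpha> z 1)) = 0" and z: "z \<in> Z"
  defines "\<mu> \<equiv> \<lambda>k. \<Sum>y\<in>Z. (cmod (\<alpha> y k))\<^sup>2"
  shows "\<mu> 1 * (cmod (\<alpha> z 0))\<^sup>2 + \<mu> 0 * (cmod (\<alpha> z 1))\<^sup>2 \<le> \<mu> 0 * \<mu> 1"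
proof -
  define A B where "A = (\<Sum>y\<in>Z - {z}. (cmod (\<alpha> y 0))\<^sup>2)" and "B = (\<Sum>y\<in>Z - {z}. (cmod (\<alpha> y 1))\<^sup>2)"
  define a b where "a = (cmod (\<alpha> z 0))\<^sup>2" and "b = (cmod (\<alpha> z 1))\<^sup>2"
  have m: "\<mu> 0 = a + A" "\<mu> 1 = b + B"
    unfolding \<mu>_def A_def B_def a_def b_def using fin z by (simp_all add: sum.remove)
  have "\<alpha> z 0 * cnj (\<alpha> z 1) + (\<Sum>y\<in>Z - {z}. \<alpha> y 0 * cnj (\<alpha> y 1)) = 0"
    using off fin z by (simp add: sum.remove)
  then have "(\<Sum>y\<in>Z - {z}. \<alpha> y 0 * cnj (\<alpha> y 1)) = - (\<alpha> z 0 * cnj (\<alpha> z 1))"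
    by (simp add: eq_neg_iff_add_eq_0 add.commute)
  then have "a * b = (cmod (\<Sum>y\<in>Z - {z}. \<alpha> y 0 * cnj (\<alpha> y 1)))\<^sup>2"
    by (simp add: a_def b_def norm_mult power_mult_distrib)
  also have "\<dots> \<le> A * B" unfolding A_def B_def by (rule norm_sum_mult_cnj_sq_le)
  finally show ?thesis unfolding m a_def[symmetric] b_def[symmetric] by (simp add: algebra_simps)
qed

text \<open>Hence \<open>s\<^sub>z\<^sub>k = |\<alpha>\<^sub>z\<^sub>k|\<^sup>2 / \<mu>\<^sub>k\<close> has row sums at most 1 and majorisation applies.\<close>

lemma eta_orthogonal_columns:
  fixes \<alpha> :: "'z \<Rightarrow> nat \<Rightarrow> complex"
  assumes fin: "finite Z" and off: "(\<Sum>z\<in>Z. \<alpha> z 0 * cnj (\<alpha> z 1)) = 0"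
  shows "(\<Sum>k<2. eta (\<Sum>z\<in>Z. (cmod (\<alpha> z k))\<^sup>2)) \<le> (\<Sum>z\<in>Z. eta (\<Sum>k<2. (cmod (\<alpha> z k))\<^sup>2))"
proof -
  define \<mu> where "\<mu> k = (\<Sum>z\<in>Z. (cmod (\<alpha> z k))\<^sup>2)" for k
  define s where "s z k = (if \<mu> k = 0 then 0 else (cmod (\<alpha> z k))\<^sup>2 / \<mu> k)" for z k
  have \<mu>0: "\<mu> k \<ge> 0" for k unfolding \<mu>_def by (simp add: sum_nonneg)
  have le_\<mu>: "(cmod (\<alpha> z k))\<^sup>2 \<le> \<mu> k" if "z \<in> Z" for z k
    unfolding \<mu>_def using fin that by (intro member_le_sum) auto
  have "(\<Sum>k<2. eta (\<mu> k)) \<le> (\<Sum>z\<in>Z. eta (\<Sum>k<2. (cmod (\<alpha> z k))\<^sup>2))"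
  proof (rule eta_majorization[where s = s])
    show "\<mu> k = 0 \<or> (\<Sum>z\<in>Z. s z k) = 1" for k
      by (cases "\<mu> k = 0") (simp_all add: s_def sum_divide_distrib[symmetric] \<mu>_def)
    show "(\<Sum>k<2. (cmod (\<alpha> z k))\<^sup>2) = (\<Sum>k<2. s z k * \<mu> k)" if "z \<in> Z" for z
    proof (rule sum.cong[OF refl])
      fix k
      have "(cmod (\<alpha> z k))\<^sup>2 \<le> \<mu> k" using le_\<mu>[OF that] .
      then show "(cmod (\<alpha> z k))\<^sup>2 = s z k * \<mu> k"
        using \<mu>0[of k] by (cases "\<mu> k = 0") (auto simp: s_def)
    qed
    show "(\<Sum>k<2. s z k) \<le> 1" if z: "z \<in> Z" for z
    proof -
      have key: "\<mu> 1 * (cmod (\<alpha> z 0))\<^sup>2 + \<mu> 0 * (cmod (\<alpha> z 1))\<^sup>2 \<le> \<mu> 0 * \<mu> 1"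
        using row_bound_orthogonal_columns[OF fin off z] by (simp add: \<mu>_def)
      consider "\<mu> 0 = 0" | "\<mu> 1 = 0" | "\<mu> 0 > 0" "\<mu> 1 > 0" using \<mu>0[of 0] \<mu>0[of 1] by linarith
      then show ?thesis
      proof cases
        case 3
        have "(cmod (\<alpha> z 0))\<^sup>2 / \<mu> 0 + (cmod (\<alpha> z 1))\<^sup>2 / \<mu> 1
              = (\<mu> 1 * (cmod (\<alpha> z 0))\<^sup>2 + \<mu> 0 * (cmod (\<alpha> z 1))\<^sup>2) / (\<mu> 0 * \<mu> 1)"
          using 3 by (simp add: field_simps)
        also have "\<dots> \<le> 1" using key 3 by simp
        finally show ?thesis using 3 by (simp add: sum_lessThan_2 s_def)
      qed (use le_\<mu>[OF z] \<mu>0[of 0] \<mu>0[of 1] in \<open>auto simp: sum_lessThan_2 s_def divide_le_eq_1\<close>)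
    qed
  qed (use fin \<mu>0 in \<open>auto simp: s_def\<close>)
  then show ?thesis by (simp add: \<mu>_def)
qed

text \<open>Expanding the \<open>u\<^sub>z\<close> in the eigenbasis gives two orthogonal columns.\<close>

lemma vn_entropy_le_ensemble:
  assumes fin: "finite Z"
  shows "vn_entropy 2 (gram_matrix Z u) \<le> (\<Sum>z\<in>Z. eta (\<Sum>j<2. (cmod (u z j))\<^sup>2))"
proof -
  obtain \<mu> v where d: "eigendec \<mu> v (gram_matrix Z u)" using gram_eigendec_exists by blast
  have v: "onb 2 v" using d by (rule eigendec_onb)
  define \<alpha> where "\<alpha> z k = inner2 (v k) (u z)" for z k
  have off: "(\<Sum>z\<in>Z. \<alpha> z 0 * cnj (\<alpha> z 1)) = 0"
    using eigendec_eigenvector[OF d, of 0 1]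
    by (simp add: gram_qform \<alpha>_def inner2_swap[of "u _"] mult.commute)
  have "vn_entropy 2 (gram_matrix Z u) = (\<Sum>k<2. eta (\<Sum>z\<in>Z. (cmod (\<alpha> z k))\<^sup>2))"
    by (simp add: vn_entropy_eigendec[OF d] gram_eigenvalue[OF d] \<alpha>_def sum_lessThan_2)
  also have "\<dots> \<le> (\<Sum>z\<in>Z. eta (\<Sum>k<2. (cmod (\<alpha> z k))\<^sup>2))"
    by (rule eta_orthogonal_columns[OF fin off])
  also have "\<dots> = (\<Sum>z\<in>Z. eta (\<Sum>j<2. (cmod (u z j))\<^sup>2))"
    by (simp add: \<alpha>_def parseval_norm[OF v])
  finally show ?thesis .
qed

text \<open>Concavity of the eigenvalue entropy, via Schur concavity in the eigenbasis of the mixture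
  followed by concavity of \<open>eta\<close>.\<close>

lemma eigendec_entropy_concave:
  fixes q :: "nat \<Rightarrow> real" and \<sigma> :: "nat \<Rightarrow> nat \<Rightarrow> nat \<Rightarrow> complex"
  assumes d\<rho>: "eigendec \<nu> f \<rho>"
    and d\<sigma>: "\<And>i. i < 2 \<Longrightarrow> eigendec (\<mu> i) (e i) (\<sigma> i)"
    and \<mu>0: "\<And>i k. i < 2 \<Longrightarrow> k < 2 \<Longrightarrow> \<mu> i k \<ge> 0"
    and q0: "\<And>i. i < 2 \<Longrightarrow> q i \<ge> 0" and q1: "q 0 + q 1 \<le> 1"
    and mix: "\<And>j j'. j < 2 \<Longrightarrow> j' < 2 \<Longrightarrow> \<rho> j j' = (\<Sum>i<2. complex_of_real (q i) * \<sigma> i j j')"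
  shows "(\<Sum>i<2. q i * (\<Sum>k<2. eta (\<mu> i k))) \<le> (\<Sum>m<2. eta (\<nu> m))"
proof -
  have f: "onb 2 f" using d\<rho> by (rule eigendec_onb)
  define x where "x i m = Re (qform (\<sigma> i) (f m) (f m))" for i m
  have x0: "x i m \<ge> 0" if "i < 2" for i m
    unfolding x_def using \<mu>0[OF that]
    by (simp add: eigendec_qform_diag[OF d\<sigma>[OF that]]) (rule sum_nonneg, simp)
  have \<nu>: "\<nu> m = (\<Sum>i<2. q i * x i m)" if "m < 2" for m
  proof -
    have "complex_of_real (\<nu> m) = qform \<rho> (f m) (f m)"
      using eigendec_eigenvector[OF d\<rho> that that] by simp
    also have "\<dots> = (\<Sum>i<2. complex_of_real (q i) * qform (\<sigma> i) (f m) (f m))"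
      by (simp add: qform_expand mix sum_lessThan_2 algebra_simps)
    finally have "\<nu> m = Re (\<Sum>i<2. complex_of_real (q i) * qform (\<sigma> i) (f m) (f m))"
      by (metis Re_complex_of_real)
    then show ?thesis by (simp add: x_def sum_lessThan_2)
  qed
  have "(\<Sum>i<2. q i * (\<Sum>k<2. eta (\<mu> i k))) \<le> (\<Sum>i<2. q i * (\<Sum>m<2. eta (x i m)))"
    unfolding x_def using q0 \<mu>0
    by (intro sum_mono mult_left_mono eigendec_entropy_le_diagonal[OF d\<sigma> _ f]) auto
  also have "\<dots> = (\<Sum>m<2. \<Sum>i<2. q i * eta (x i m))"
    by (simp add: sum_distrib_left sum_lessThan_2 algebra_simps)
  also have "\<dots> \<le> (\<Sum>m<2. eta (\<Sum>i<2. q i * x i m))"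
    using q0 q1 x0 by (intro sum_mono eta_concave) (auto simp: sum_lessThan_2)
  also have "\<dots> = (\<Sum>m<2. eta (\<nu> m))" by (intro sum.cong) (auto simp: \<nu>)
  finally show ?thesis .
qed

lemma vn_entropy_concave:
  fixes q :: "nat \<Rightarrow> real" and u :: "nat \<Rightarrow> 'z \<Rightarrow> nat \<Rightarrow> complex"
  assumes q0: "\<And>i. i < 2 \<Longrightarrow> q i \<ge> 0" and q1: "q 0 + q 1 \<le> 1"
    and mix: "\<And>j j'. j < 2 \<Longrightarrow> j' < 2 \<Longrightarrow>
                \<rho> j j' = (\<Sum>i<2. complex_of_real (q i) * gram_matrix Z (u i) j j')"
  shows "(\<Sum>i<2. q i * vn_entropy 2 (gram_matrix Z (u i))) \<le> vn_entropy 2 \<rho>"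
proof -
  have "\<forall>i. \<exists>p. eigendec (fst p) (snd p) (gram_matrix Z (u i))"
    using gram_eigendec_exists by (metis fst_conv snd_conv)
  then obtain p where d\<sigma>: "\<And>i. eigendec (fst (p i)) (snd (p i)) (gram_matrix Z (u i))"
    by metis
  have "\<rho> 1 0 = cnj (\<rho> 0 1)" "Im (\<rho> 0 0) = 0" "Im (\<rho> 1 1) = 0"
    by (simp_all add: mix sum_lessThan_2 gram_matrix_def mult.commute mult_cnj_eq_norm_sq Im_sum)
  then obtain \<nu> f where d\<rho>: "eigendec \<nu> f \<rho>" using hermitian_eigendec_exists by blast
  have "(\<Sum>i<2. q i * vn_entropy 2 (gram_matrix Z (u i))) = (\<Sum>i<2. q i * (\<Sum>k<2. eta (fst (p i) k)))"
    by (simp add: vn_entropy_eigendec[OF d\<sigma>])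
  also have "\<dots> \<le> (\<Sum>m<2. eta (\<nu> m))"
    using gram_eigenvalue_nonneg[OF d\<sigma>] q0 q1 mix
    by (intro eigendec_entropy_concave[OF d\<rho> d\<sigma>]) auto
  also have "\<dots> = vn_entropy 2 \<rho>" by (simp add: vn_entropy_eigendec[OF d\<rho>])
  finally show ?thesis .
qed

lemma cfg3_apply:
  assumes "P \<noteq> Q" "P \<noteq> R" "Q \<noteq> R"
  shows "cfg3 P a Q b R c P = a" "cfg3 P a Q b R c Q = b" "cfg3 P a Q b R c R = c"
  using assms by (auto simp: cfg3_def)

lemma cfg3_reorder:
  assumes "P \<noteq> Q" "P \<noteq> R" "Q \<noteq> R"
  shows cfg3_swap12: "cfg3 P a Q b R c = cfg3 Q b P a R c"
    and cfg3_swap23: "cfg3 P a Q b R c = cfg3 P a R c Q b"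
    and cfg3_rotate: "cfg3 P a Q b R c = cfg3 R c P a Q b"
  using assms unfolding cfg3_def by (intro ext; simp)+

lemma cfg3_eqI:
  assumes "P \<noteq> Q" "P \<noteq> R" "Q \<noteq> R" "P < 3" "Q < 3" "R < 3"
    and "x \<in> configs 3 (\<lambda>_. 2)"
  shows "x = cfg3 P (x P) Q (x Q) R (x R)"
proof
  fix n
  show "x n = cfg3 P (x P) Q (x Q) R (x R) n"
  proof (cases "n < 3")
    case True
    then have "n = P \<or> n = Q \<or> n = R" using assms(1-6) by presburger
    then show ?thesis using cfg3_apply[OF assms(1-3)] by auto
  qed (use assms in \<open>simp add: configs_def cfg3_def\<close>)
qed

lemma cfg3_bij:
  assumes d: "P \<noteq> Q" "P \<noteq> R" "Q \<noteq> R" and l: "P < 3" "Q < 3" "R < 3"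
  shows "bij_betw (\<lambda>(a, b, c). cfg3 P a Q b R c) ({..<2} \<times> {..<2} \<times> {..<2}) (configs 3 (\<lambda>_. 2))"
proof (rule bij_betw_byWitness[where f' = "\<lambda>x. (x P, x Q, x R)"])
  show "\<forall>z\<in>{..<2} \<times> {..<2} \<times> {..<2}. (\<lambda>x. (x P, x Q, x R)) ((\<lambda>(a, b, c). cfg3 P a Q b R c) z) = z"
    using cfg3_apply[OF d] by auto
  show "\<forall>x\<in>configs 3 (\<lambda>_. 2). (\<lambda>(a, b, c). cfg3 P a Q b R c) (x P, x Q, x R) = x"
    using cfg3_eqI[OF d l] by auto
  have "cfg3 P a Q b R c \<in> configs 3 (\<lambda>_. 2)" if "a < 2" "b < 2" "c < 2" for a b c
  proof -
    have "j = P \<or> j = Q \<or> j = R" if "j < 3" for j using d l that by presburger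
    then show ?thesis using that l cfg3_apply[OF d] by (auto simp: configs_def cfg3_def)
  qed
  then show "(\<lambda>(a, b, c). cfg3 P a Q b R c) ` ({..<2} \<times> {..<2} \<times> {..<2}) \<subseteq> configs 3 (\<lambda>_. 2)"
    by auto
  show "(\<lambda>x. (x P, x Q, x R)) ` configs 3 (\<lambda>_. 2) \<subseteq> {..<2} \<times> {..<2} \<times> {..<2}"
    using l by (auto simp: configs_def)
qed

lemma sum_configs_cfg3:
  assumes "P \<noteq> Q" "P \<noteq> R" "Q \<noteq> R" "P < 3" "Q < 3" "R < 3"
  shows "(\<Sum>x\<in>configs 3 (\<lambda>_. 2). F x) = (\<Sum>a<2. \<Sum>b<2. \<Sum>c<2. F (cfg3 P a Q b R c))"
  by (simp add: sum.reindex_bij_betw[OF cfg3_bij[OF assms], symmetric] sum.cartesian_product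
      split_def)

text \<open>The one-qubit reduced density matrix of party \<open>W\<close>, as the Gram matrix of the vectors
  \<open>\<psi>(\<cdot>, b, c)\<close> indexed by the values \<open>(b, c)\<close> of the other two parties.\<close>

definition reduced_state :: "((nat \<Rightarrow> nat) \<Rightarrow> complex) \<Rightarrow> nat \<Rightarrow> nat \<Rightarrow> nat \<Rightarrow> complex" where
  "reduced_state \<psi> W =
     gram_matrix ({..<2} \<times> {..<2}) (\<lambda>z j. \<psi> (cfg3 W j (rest1 W) (fst z) (rest2 W) (snd z)))"

lemma rest_distinct:
  assumes "X < 3"
  shows "X \<noteq> rest1 X" "X \<noteq> rest2 X" "rest1 X \<noteq> rest2 X" "rest1 X < 3" "rest2 X < 3"
  using assms unfolding rest1_def rest2_def by auto

lemma reduced_state_sum: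
  assumes d: "W \<noteq> S" "W \<noteq> T" "S \<noteq> T" and l: "W < 3" "S < 3" "T < 3"
  shows "reduced_state \<psi> W j j' = (\<Sum>s<2. \<Sum>t<2. \<psi> (cfg3 W j S s T t) * cnj (\<psi> (cfg3 W j' S s T t)))"
proof -
  have sum: "reduced_state \<psi> W j j' = (\<Sum>b<2. \<Sum>c<2.
      \<psi> (cfg3 W j (rest1 W) b (rest2 W) c) * cnj (\<psi> (cfg3 W j' (rest1 W) b (rest2 W) c)))"
    by (simp add: reduced_state_def gram_matrix_def sum.cartesian_product split_def)
  have "(S = rest1 W \<and> T = rest2 W) \<or> (S = rest2 W \<and> T = rest1 W)"
    using d l unfolding rest1_def rest2_def by presburger
  then show ?thesis
  proof
    assume "S = rest2 W \<and> T = rest1 W"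
    moreover have "(\<Sum>s<2. \<Sum>t<2. \<psi> (cfg3 W j S s T t) * cnj (\<psi> (cfg3 W j' S s T t)))
        = (\<Sum>t<2. \<Sum>s<2. \<psi> (cfg3 W j T t S s) * cnj (\<psi> (cfg3 W j' T t S s)))"
      by (subst sum.swap) (simp add: cfg3_swap23[OF d])
    ultimately show ?thesis by (simp add: sum)
  qed (simp add: sum)
qed

lemma valid_scheme_bases:
  assumes "valid_scheme 3 (\<lambda>_. 2) \<pi> B"
  shows "onb 2 (B [])" "a < 2 \<Longrightarrow> onb 2 (B [a])" "a < 2 \<Longrightarrow> b < 2 \<Longrightarrow> onb 2 (B [a, b])"
proof -
  have v: "\<And>hist. length hist < 3 \<Longrightarrow> (\<forall>m<length hist. hist ! m < 2) \<Longrightarrow> onb 2 (B hist)"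
    using assms unfolding valid_scheme_def by blast
  show "onb 2 (B [])" by (rule v) simp_all
  show "a < 2 \<Longrightarrow> onb 2 (B [a])" by (rule v) simp_all
  show "a < 2 \<Longrightarrow> b < 2 \<Longrightarrow> onb 2 (B [a, b])" by (rule v) (auto simp: less_Suc_eq)
qed

lemma valid_scheme_parties:
  assumes "valid_scheme 3 (\<lambda>_. 2) \<pi> B"
  shows "\<pi> 0 \<noteq> \<pi> 1" "\<pi> 0 \<noteq> \<pi> 2" "\<pi> 1 \<noteq> \<pi> 2" "\<pi> 0 < 3" "\<pi> 1 < 3" "\<pi> 2 < 3"
proof -
  have p: "\<pi> permutes {..<3}" using assms unfolding valid_scheme_def by blast
  show "\<pi> 0 \<noteq> \<pi> 1" "\<pi> 0 \<noteq> \<pi> 2" "\<pi> 1 \<noteq> \<pi> 2"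
    by (simp_all add: inj_eq[OF permutes_inj[OF p]])
  show "\<pi> 0 < 3" "\<pi> 1 < 3" "\<pi> 2 < 3" using permutes_in_image[OF p] by simp_all
qed

text \<open>Unnormalised amplitudes of the remaining parties after the first outcome \<open>i\<^sub>0\<close>, and of the
  last party after the outcomes \<open>i\<^sub>0, i\<^sub>1\<close>.\<close>

definition amp_after1 :: "((nat \<Rightarrow> nat) \<Rightarrow> complex) \<Rightarrow> (nat \<Rightarrow> nat) \<Rightarrow> (nat list \<Rightarrow> nat \<Rightarrow> nat \<Rightarrow> complex)
    \<Rightarrow> nat \<Rightarrow> nat \<Rightarrow> nat \<Rightarrow> complex" where
  "amp_after1 \<psi> \<pi> B i0 b c = inner2 (B [] i0) (\<lambda>a. \<psi> (cfg3 (\<pi> 0) a (\<pi> 1) b (\<pi> 2) c))"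

definition amp_after2 :: "((nat \<Rightarrow> nat) \<Rightarrow> complex) \<Rightarrow> (nat \<Rightarrow> nat) \<Rightarrow> (nat list \<Rightarrow> nat \<Rightarrow> nat \<Rightarrow> complex)
    \<Rightarrow> nat \<Rightarrow> nat \<Rightarrow> nat \<Rightarrow> complex" where
  "amp_after2 \<psi> \<pi> B i0 i1 c = inner2 (B [i0] i1) (\<lambda>b. amp_after1 \<psi> \<pi> B i0 b c)"

lemma outcome_prob_cfg3:
  assumes v: "valid_scheme 3 (\<lambda>_. 2) \<pi> B"
  shows "outcome_prob 3 (\<lambda>_. 2) \<psi> \<pi> B (cfg3 0 i0 1 i1 2 i2)
           = (cmod (inner2 (B [i0, i1] i2) (amp_after2 \<psi> \<pi> B i0 i1)))\<^sup>2"
proof -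
  note p = valid_scheme_parties[OF v]
  let ?i = "cfg3 0 i0 1 i1 2 i2"
  have i: "?i 0 = i0" "?i 1 = i1" "?i 2 = i2" by (simp_all add: cfg3_def)
  have hist: "map f [0..<0] = []" "map f [0..<1] = [f 0]" "map f [0..<2] = [f 0, f 1]" for f :: "nat \<Rightarrow> nat"
    by (simp_all add: numeral_2_eq_2)
  have prod: "(\<Prod>k<3. f k) = f 0 * f 1 * f 2" for f :: "nat \<Rightarrow> complex"
    by (simp add: numeral_3_eq_3 numeral_2_eq_2)
  have "(\<Sum>x\<in>configs 3 (\<lambda>_. 2). (\<Prod>k<3. cnj (B (map ?i [0..<k]) (?i k) (x (\<pi> k)))) * \<psi> x)
      = (\<Sum>a<2. \<Sum>b<2. \<Sum>c<2. cnj (B [] i0 a) * cnj (B [i0] i1 b) * cnj (B [i0, i1] i2 c)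
            * \<psi> (cfg3 (\<pi> 0) a (\<pi> 1) b (\<pi> 2) c))"
    by (simp only: sum_configs_cfg3[OF p] prod hist i cfg3_apply[OF p(1-3)])
  also have "\<dots> = inner2 (B [i0, i1] i2) (amp_after2 \<psi> \<pi> B i0 i1)"
    unfolding amp_after2_def amp_after1_def inner2_def sum_lessThan_2
    by (simp only: ring_distribs ac_simps)
  finally show ?thesis by (simp add: outcome_prob_def)
qed

lemma scheme_entropy_ge_two_steps:
  assumes v: "valid_scheme 3 (\<lambda>_. 2) \<pi> B"
  shows "(\<Sum>i0<2. \<Sum>i1<2. eta (\<Sum>c<2. (cmod (amp_after2 \<psi> \<pi> B i0 i1 c))\<^sup>2))
     \<le> shannon (outcome_prob 3 (\<lambda>_. 2) \<psi> \<pi> B) (configs 3 ((\<lambda>_. 2) \<circ> \<pi>))"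
proof -
  have "(\<Sum>i0<2. \<Sum>i1<2. eta (\<Sum>c<2. (cmod (amp_after2 \<psi> \<pi> B i0 i1 c))\<^sup>2))
      = (\<Sum>i0<2. \<Sum>i1<2. eta (\<Sum>i2<2. (cmod (inner2 (B [i0, i1] i2) (amp_after2 \<psi> \<pi> B i0 i1)))\<^sup>2))"
    by (intro sum.cong refl) (simp add: parseval_norm valid_scheme_bases(3)[OF v])
  also have "\<dots> \<le> (\<Sum>i0<2. \<Sum>i1<2. \<Sum>i2<2. eta ((cmod (inner2 (B [i0, i1] i2) (amp_after2 \<psi> \<pi> B i0 i1)))\<^sup>2))"
    by (intro sum_mono eta_subadditive) auto
  also have "\<dots> = (\<Sum>i0<2. \<Sum>i1<2. \<Sum>i2<2. eta (outcome_prob 3 (\<lambda>_. 2) \<psi> \<pi> B (cfg3 0 i0 1 i1 2 i2)))"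
    by (simp only: outcome_prob_cfg3[OF v])
  also have "\<dots> = shannon (outcome_prob 3 (\<lambda>_. 2) \<psi> \<pi> B) (configs 3 ((\<lambda>_. 2) \<circ> \<pi>))"
    by (simp add: shannon_eta comp_def sum_configs_cfg3[of 0 1 2])
  finally show ?thesis .
qed

text \<open>The state of the last measured party is the ensemble of the conditional vectors
  \<open>amp_after2 i\<^sub>0 i\<^sub>1\<close>; the ensemble bound compares its entropy with the outcome entropy.\<close>

lemma scheme_entropy_ge_last_party:
  assumes v: "valid_scheme 3 (\<lambda>_. 2) \<pi> B"
  shows "vn_entropy 2 (reduced_state \<psi> (\<pi> 2))
           \<le> shannon (outcome_prob 3 (\<lambda>_. 2) \<psi> \<pi> B) (configs 3 ((\<lambda>_. 2) \<circ> \<pi>))"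
proof -
  note p = valid_scheme_parties[OF v] and b = valid_scheme_bases[OF v]
  let ?Z = "{..<2::nat} \<times> {..<2::nat}"
  let ?u = "\<lambda>z. amp_after2 \<psi> \<pi> B (fst z) (snd z)"
  have "gram_matrix ?Z ?u c c' = reduced_state \<psi> (\<pi> 2) c c'" for c c'
  proof -
    have "gram_matrix ?Z ?u c c'
        = (\<Sum>i0<2. \<Sum>i1<2. amp_after2 \<psi> \<pi> B i0 i1 c * cnj (amp_after2 \<psi> \<pi> B i0 i1 c'))"
      by (simp add: gram_matrix_def sum.cartesian_product split_def)
    also have "\<dots> = (\<Sum>i0<2. \<Sum>b<2. amp_after1 \<psi> \<pi> B i0 b c * cnj (amp_after1 \<psi> \<pi> B i0 b c'))"
      by (rule sum.cong[OF refl]) (simp add: amp_after2_def parseval b(2))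
    also have "\<dots> = (\<Sum>b<2. \<Sum>a<2. \<psi> (cfg3 (\<pi> 0) a (\<pi> 1) b (\<pi> 2) c) * cnj (\<psi> (cfg3 (\<pi> 0) a (\<pi> 1) b (\<pi> 2) c')))"
      by (subst sum.swap) (simp add: amp_after1_def parseval b(1))
    also have "\<dots> = (\<Sum>a<2. \<Sum>b<2. \<psi> (cfg3 (\<pi> 2) c (\<pi> 0) a (\<pi> 1) b) * cnj (\<psi> (cfg3 (\<pi> 2) c' (\<pi> 0) a (\<pi> 1) b)))"
      by (subst sum.swap) (simp only: cfg3_rotate[OF p(1-3)])
    also have "\<dots> = reduced_state \<psi> (\<pi> 2) c c'"
      using reduced_state_sum[of "\<pi> 2" "\<pi> 0" "\<pi> 1" \<psi> c c'] p by simp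
    finally show ?thesis .
  qed
  then have "reduced_state \<psi> (\<pi> 2) = gram_matrix ?Z ?u" by (intro ext) simp
  then have "vn_entropy 2 (reduced_state \<psi> (\<pi> 2)) \<le> (\<Sum>z\<in>?Z. eta (\<Sum>c<2. (cmod (?u z c))\<^sup>2))"
    using vn_entropy_le_ensemble[of ?Z ?u] by simp
  also have "\<dots> \<le> shannon (outcome_prob 3 (\<lambda>_. 2) \<psi> \<pi> B) (configs 3 ((\<lambda>_. 2) \<circ> \<pi>))"
    using scheme_entropy_ge_two_steps[OF v] by (simp add: sum.cartesian_product split_def)
  finally show ?thesis .
qed

text \<open>The first measured party: by Schur concavity its entropy is at most the entropy of the
  first outcome, which coarse-grains the first two outcomes.\<close>

lemma scheme_entropy_ge_first_party:
  assumes v: "valid_scheme 3 (\<lambda>_. 2) \<pi> B"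
  shows "vn_entropy 2 (reduced_state \<psi> (\<pi> 0))
           \<le> shannon (outcome_prob 3 (\<lambda>_. 2) \<psi> \<pi> B) (configs 3 ((\<lambda>_. 2) \<circ> \<pi>))"
proof -
  note p = valid_scheme_parties[OF v] and b = valid_scheme_bases[OF v]
  let ?\<rho> = "reduced_state \<psi> (\<pi> 0)"
  let ?w = "\<lambda>z a. \<psi> (cfg3 (\<pi> 0) a (\<pi> 1) (fst z) (\<pi> 2) (snd z))"
  have \<rho>: "?\<rho> = gram_matrix ({..<2} \<times> {..<2}) ?w"
    by (intro ext) (simp add: reduced_state_sum[OF p] gram_matrix_def sum.cartesian_product split_def)
  obtain \<mu> v where d: "eigendec \<mu> v ?\<rho>"
    unfolding \<rho> using gram_eigendec_exists by blast
  have \<mu>: "\<mu> k \<ge> 0" if "k < 2" for k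
    using gram_eigenvalue_nonneg d that unfolding \<rho> by blast
  have diag: "Re (qform ?\<rho> (B [] i0) (B [] i0))
      = (\<Sum>i1<2. \<Sum>c<2. (cmod (amp_after2 \<psi> \<pi> B i0 i1 c))\<^sup>2)" if "i0 < 2" for i0
  proof -
    have "Re (qform ?\<rho> (B [] i0) (B [] i0)) = (\<Sum>b<2. \<Sum>c<2. (cmod (amp_after1 \<psi> \<pi> B i0 b c))\<^sup>2)"
      by (simp add: \<rho> gram_qform_diag amp_after1_def sum.cartesian_product split_def)
    also have "\<dots> = (\<Sum>c<2. \<Sum>i1<2. (cmod (amp_after2 \<psi> \<pi> B i0 i1 c))\<^sup>2)"
      by (subst sum.swap) (simp add: amp_after2_def parseval_norm b(2)[OF that])
    also have "\<dots> = (\<Sum>i1<2. \<Sum>c<2. (cmod (amp_after2 \<psi> \<pi> B i0 i1 c))\<^sup>2)"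
      by (rule sum.swap)
    finally show ?thesis .
  qed
  have "vn_entropy 2 ?\<rho> = (\<Sum>k<2. eta (\<mu> k))" by (rule vn_entropy_eigendec[OF d])
  also have "\<dots> \<le> (\<Sum>i0<2. eta (Re (qform ?\<rho> (B [] i0) (B [] i0))))"
    by (rule eigendec_entropy_le_diagonal[OF d \<mu> b(1)])
  also have "\<dots> = (\<Sum>i0<2. eta (\<Sum>i1<2. \<Sum>c<2. (cmod (amp_after2 \<psi> \<pi> B i0 i1 c))\<^sup>2))"
    by (intro sum.cong refl) (simp add: diag)
  also have "\<dots> \<le> (\<Sum>i0<2. \<Sum>i1<2. eta (\<Sum>c<2. (cmod (amp_after2 \<psi> \<pi> B i0 i1 c))\<^sup>2))"
    by (intro sum_mono eta_subadditive) (auto intro: sum_nonneg)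
  also have "\<dots> \<le> shannon (outcome_prob 3 (\<lambda>_. 2) \<psi> \<pi> B) (configs 3 ((\<lambda>_. 2) \<circ> \<pi>))"
    by (rule scheme_entropy_ge_two_steps[OF v])
  finally show ?thesis .
qed

text \<open>Measuring party \<open>X\<close> in the basis \<open>b\<close>: the unnormalised post-measurement vectors are the
  coefficients of \<open>\<psi>\<close> along \<open>b\<close>, so by Parseval they carry the full norm and the full reduced
  states of the remaining parties.\<close>

lemma post_unnorm_inner2:
  "post_unnorm \<psi> X b i j k = inner2 (b i) (\<lambda>a. \<psi> (cfg3 X a (rest1 X) j (rest2 X) k))"
  by (simp add: post_unnorm_def inner2_def)

lemma post_prob_nonneg: "post_prob \<psi> X b i \<ge> 0"
  by (simp add: post_prob_def sum_nonneg)

lemma post_prob_sum: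
  assumes \<psi>: "unit_state 3 (\<lambda>_. 2) \<psi>" and X: "X < 3" and b: "onb 2 b"
  shows "post_prob \<psi> X b 0 + post_prob \<psi> X b 1 = 1"
proof -
  note r = rest_distinct[OF X]
  let ?A = "\<lambda>a j k. \<psi> (cfg3 X a (rest1 X) j (rest2 X) k)"
  have "post_prob \<psi> X b 0 + post_prob \<psi> X b 1
      = (\<Sum>j<2. \<Sum>k<2. \<Sum>i<2. (cmod (post_unnorm \<psi> X b i j k))\<^sup>2)"
    by (simp add: post_prob_def sum_lessThan_2)
  also have "\<dots> = (\<Sum>j<2. \<Sum>k<2. \<Sum>a<2. (cmod (?A a j k))\<^sup>2)"
    by (simp add: post_unnorm_inner2 parseval_norm[OF b])
  also have "\<dots> = (\<Sum>a<2. \<Sum>j<2. \<Sum>k<2. (cmod (?A a j k))\<^sup>2)"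
    by (simp add: sum_lessThan_2)
  also have "\<dots> = (\<Sum>x\<in>configs 3 (\<lambda>_. 2). (cmod (\<psi> x))\<^sup>2)"
    by (simp only: sum_configs_cfg3[OF r(1-3) X r(4,5)])
  also have "\<dots> = 1" using \<psi> by (simp add: unit_state_def)
  finally show ?thesis .
qed

text \<open>Renormalisation is undone by the weight \<open>p\<^sub>i\<close>; for \<open>p\<^sub>i = 0\<close> both sides vanish.\<close>

lemma post_state_weighted:
  assumes "j < 2" "j' < 2" "k < 2" "k' < 2"
  shows "complex_of_real (post_prob \<psi> X b i) * (post_state \<psi> X b i j k * cnj (post_state \<psi> X b i j' k'))
           = post_unnorm \<psi> X b i j k * cnj (post_unnorm \<psi> X b i j' k')"
proof (cases "post_prob \<psi> X b i = 0")
  case True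
  have "(cmod (post_unnorm \<psi> X b i j k))\<^sup>2 = 0" if "j < 2" "k < 2" for j k
  proof -
    have "(cmod (post_unnorm \<psi> X b i j k))\<^sup>2 \<le> (\<Sum>k<2. (cmod (post_unnorm \<psi> X b i j k))\<^sup>2)"
      using that by (intro member_le_sum) auto
    also have "\<dots> \<le> post_prob \<psi> X b i"
      unfolding post_prob_def using that by (intro member_le_sum) (auto intro: sum_nonneg)
    finally show ?thesis using True by simp
  qed
  then show ?thesis using assms True by simp
next
  case False
  then have p: "post_prob \<psi> X b i > 0" using post_prob_nonneg[of \<psi> X b i] by simp
  have "complex_of_real (sqrt (post_prob \<psi> X b i)) * cnj (complex_of_real (sqrt (post_prob \<psi> X b i)))
      = complex_of_real (post_prob \<psi> X b i)"
    using p by (simp flip: of_real_mult)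
  moreover have "complex_of_real (sqrt (post_prob \<psi> X b i)) \<noteq> 0" using p by simp
  ultimately show ?thesis by (simp add: post_state_def field_simps)
qed

lemma reduced_state_rest1_post:
  assumes X: "X < 3" and b: "onb 2 b"
  shows "reduced_state \<psi> (rest1 X) j j'
           = (\<Sum>i<2. \<Sum>k<2. post_unnorm \<psi> X b i j k * cnj (post_unnorm \<psi> X b i j' k))"
proof -
  note r = rest_distinct[OF X]
  have "(\<Sum>i<2. \<Sum>k<2. post_unnorm \<psi> X b i j k * cnj (post_unnorm \<psi> X b i j' k))
      = (\<Sum>k<2. \<Sum>a<2. \<psi> (cfg3 X a (rest1 X) j (rest2 X) k) * cnj (\<psi> (cfg3 X a (rest1 X) j' (rest2 X) k)))"
    by (subst sum.swap) (simp add: post_unnorm_inner2 parseval[OF b])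
  also have "\<dots> = (\<Sum>a<2. \<Sum>k<2. \<psi> (cfg3 (rest1 X) j X a (rest2 X) k) * cnj (\<psi> (cfg3 (rest1 X) j' X a (rest2 X) k)))"
    by (subst sum.swap) (simp only: cfg3_swap12[OF r(1-3)])
  also have "\<dots> = reduced_state \<psi> (rest1 X) j j'"
    using reduced_state_sum[of "rest1 X" X "rest2 X" \<psi> j j'] r X by simp
  finally show ?thesis by simp
qed

lemma reduced_state_rest2_post:
  assumes X: "X < 3" and b: "onb 2 b"
  shows "reduced_state \<psi> (rest2 X) k k'
           = (\<Sum>i<2. \<Sum>j<2. post_unnorm \<psi> X b i j k * cnj (post_unnorm \<psi> X b i j k'))"
proof -
  note r = rest_distinct[OF X]
  have "(\<Sum>i<2. \<Sum>j<2. post_unnorm \<psi> X b i j k * cnj (post_unnorm \<psi> X b i j k'))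
      = (\<Sum>j<2. \<Sum>a<2. \<psi> (cfg3 X a (rest1 X) j (rest2 X) k) * cnj (\<psi> (cfg3 X a (rest1 X) j (rest2 X) k')))"
    by (subst sum.swap) (simp add: post_unnorm_inner2 parseval[OF b])
  also have "\<dots> = (\<Sum>a<2. \<Sum>j<2. \<psi> (cfg3 (rest2 X) k X a (rest1 X) j) * cnj (\<psi> (cfg3 (rest2 X) k' X a (rest1 X) j)))"
    by (subst sum.swap) (simp only: cfg3_rotate[OF r(1-3)])
  also have "\<dots> = reduced_state \<psi> (rest2 X) k k'"
    using reduced_state_sum[of "rest2 X" X "rest1 X" \<psi> k k'] r X by simp
  finally show ?thesis by simp
qed

lemma ent_entropy_gram:
  "ent_entropy \<phi> = vn_entropy 2 (gram_matrix {..<2} (\<lambda>k j. \<phi> j k))"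
  unfolding ent_entropy_def by (rule arg_cong[where f = "vn_entropy 2"]) (simp add: gram_matrix_def fun_eq_iff)

lemma ent_entropy_gram_transpose:
  "ent_entropy \<phi> = vn_entropy 2 (gram_matrix {..<2} \<phi>)"
  using vn_entropy_gram_transpose[of \<phi>] by (simp only: ent_entropy_gram)

text \<open>Average entanglement after measuring \<open>X\<close> is at most the entropy of either unmeasured party:
  that party's reduced state is the \<open>p\<^sub>i\<close>-mixture of its post-measurement reduced states, and the
  von Neumann entropy is concave.\<close>

lemma average_post_entropy_le:
  assumes \<psi>: "unit_state 3 (\<lambda>_. 2) \<psi>" and X: "X < 3" and b: "onb 2 b"
    and W: "W < 3" "W \<noteq> X"
  shows "(\<Sum>i<2. post_prob \<psi> X b i * ent_entropy (post_state \<psi> X b i)) \<le> vn_entropy 2 (reduced_state \<psi> W)"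
proof -
  let ?q = "post_prob \<psi> X b" and ?\<phi> = "post_state \<psi> X b"
  have q: "?q i \<ge> 0" "?q 0 + ?q 1 \<le> 1" for i
    using post_prob_nonneg post_prob_sum[OF \<psi> X b] by simp_all
  have "W = rest1 X \<or> W = rest2 X" using X W unfolding rest1_def rest2_def by presburger
  then show ?thesis
  proof
    assume W1: "W = rest1 X"
    have mix: "reduced_state \<psi> (rest1 X) j j'
        = (\<Sum>i<2. complex_of_real (?q i) * gram_matrix {..<2} (\<lambda>k j. ?\<phi> i j k) j j')"
      if "j < 2" "j' < 2" for j j'
      using that by (simp add: reduced_state_rest1_post[OF X b] gram_matrix_def sum_distrib_left
          post_state_weighted)
    show ?thesis
      using vn_entropy_concave[of ?q, OF q mix] W1 by (simp add: ent_entropy_gram)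
  next
    assume W2: "W = rest2 X"
    have mix: "reduced_state \<psi> (rest2 X) k k'
        = (\<Sum>i<2. complex_of_real (?q i) * gram_matrix {..<2} (?\<phi> i) k k')"
      if "k < 2" "k' < 2" for k k'
      using that by (simp add: reduced_state_rest2_post[OF X b] gram_matrix_def sum_distrib_left
          post_state_weighted)
    show ?thesis
      using vn_entropy_concave[of ?q, OF q mix] W2 by (simp add: ent_entropy_gram_transpose)
  qed
qed

text \<open>Every measurement of \<open>X\<close> is dominated by every scheme: if the scheme does not start with
  \<open>X\<close>, compare through the first measured party; otherwise through the last one.\<close>

lemma average_post_entropy_le_scheme:
  assumes \<psi>: "unit_state 3 (\<lambda>_. 2) \<psi>" and X: "X < 3" and b: "onb 2 b"
    and v: "valid_scheme 3 (\<lambda>_. 2) \<pi> B"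
  shows "(\<Sum>i<2. post_prob \<psi> X b i * ent_entropy (post_state \<psi> X b i))
           \<le> shannon (outcome_prob 3 (\<lambda>_. 2) \<psi> \<pi> B) (configs 3 ((\<lambda>_. 2) \<circ> \<pi>))"
proof (cases "X = \<pi> 0")
  case False
  have "\<pi> 0 < 3" using valid_scheme_parties[OF v] by simp
  with False have "(\<Sum>i<2. post_prob \<psi> X b i * ent_entropy (post_state \<psi> X b i))
                     \<le> vn_entropy 2 (reduced_state \<psi> (\<pi> 0))"
    by (intro average_post_entropy_le[OF \<psi> X b]) auto
  also have "\<dots> \<le> shannon (outcome_prob 3 (\<lambda>_. 2) \<psi> \<pi> B) (configs 3 ((\<lambda>_. 2) \<circ> \<pi>))"
    by (rule scheme_entropy_ge_first_party[OF v])
  finally show ?thesis .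
next
  case True
  have "\<pi> 2 < 3" "\<pi> 2 \<noteq> X" using valid_scheme_parties[OF v] True by auto
  then have "(\<Sum>i<2. post_prob \<psi> X b i * ent_entropy (post_state \<psi> X b i))
               \<le> vn_entropy 2 (reduced_state \<psi> (\<pi> 2))"
    by (intro average_post_entropy_le[OF \<psi> X b])
  also have "\<dots> \<le> shannon (outcome_prob 3 (\<lambda>_. 2) \<psi> \<pi> B) (configs 3 ((\<lambda>_. 2) \<circ> \<pi>))"
    by (rule scheme_entropy_ge_last_party[OF v])
  finally show ?thesis .
qed

lemma onb_standard: "onb 2 (\<lambda>i j. if i = j then 1 else 0)"
  unfolding onb_def by (auto simp: sum_lessThan_2 less_2_cases)

text \<open>Both the supremum and the infimum range over nonempty sets (the standard basis gives a
  measurement and a scheme), so the pointwise bound passes to \<open>Sup \<le> Inf\<close>.\<close>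

lemma E_LOCC_party_le_EMB:
  assumes \<psi>: "unit_state 3 (\<lambda>_. 2) \<psi>" and X: "X < 3"
  shows "E_LOCC_party \<psi> X \<le> EMB 3 (\<lambda>_. 2) \<psi>"
  unfolding E_LOCC_party_def EMB_def
proof (rule cSup_least)
  show "{\<Sum>i<2. post_prob \<psi> X b i * ent_entropy (post_state \<psi> X b i) | b. onb 2 b} \<noteq> {}"
    using onb_standard by blast
  have std: "valid_scheme 3 (\<lambda>_. 2) id (\<lambda>_. \<lambda>i j. if i = j then 1 else 0)"
    unfolding valid_scheme_def using onb_standard by (simp add: permutes_id)
  fix s assume "s \<in> {\<Sum>i<2. post_prob \<psi> X b i * ent_entropy (post_state \<psi> X b i) | b. onb 2 b}"
  then obtain b where b: "onb 2 b" and s: "s = (\<Sum>i<2. post_prob \<psi> X b i * ent_entropy (post_state \<psi> X b i))"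
    by blast
  show "s \<le> Inf {shannon (outcome_prob 3 (\<lambda>_. 2) \<psi> \<pi> B) (configs 3 ((\<lambda>_. 2) \<circ> \<pi>)) | \<pi> B.
                    valid_scheme 3 (\<lambda>_. 2) \<pi> B}"
    using std s average_post_entropy_le_scheme[OF \<psi> X b] by (intro cInf_greatest) blast+
qed

theorem theorem1:
  fixes \<psi> :: "(nat \<Rightarrow> nat) \<Rightarrow> complex"
  assumes "unit_state 3 (\<lambda>_. 2) \<psi>"
  shows "EMB 3 (\<lambda>_. 2) \<psi> \<ge> E_LOCC \<psi>"
  using E_LOCC_party_le_EMB[OF assms, of 0] E_LOCC_party_le_EMB[OF assms, of 1]
    E_LOCC_party_le_EMB[OF assms, of 2]
  by (simp add: E_LOCC_def)

end
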